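(* Let $\mathscr A$ be an additive category and $n\ge 2$. Let $X_0\xrightarrow{f_0}X_1\xrightarrow{f_1}X_2\xrightarrow{f_2}\cdots\xrightarrow{f_{n-1}}X_n$ and $X_0\xrightarrow{f_0}X_1\xrightarrow{g_1}X'_2\xrightarrow{g_2}\cdots\xrightarrow{g_{n-1}}X'_n$ be sequences of morphisms, and put $g_0:=f_0$. Let $\varphi_k\colon X_k\to X'_k$ for $2\le k\le n$ be morphisms with $\varphi_2f_1=g_1$ and $\varphi_{k+1}f_k=g_k\varphi_k$ for $2\le k\le n-1$; that is, together with $\varphi_0=\mathrm{id}_{X_0}$ and $\varphi_1=\mathrm{id}_{X_1}$ they form a commutative ladder. Assume: (i) $f_i$ is a weak cokernel of $f_{i-1}$ for $1\le i\le n-1$; (ii) $g_i$ is a weak cokernel of $g_{i-1}$ for $1\le i\le n-1$; (iii) $f_2,\dots,f_{n-1}$ and $g_2,\dots,g_{n-1}$ lie in the radical of $\mathscr A$. Then $\varphi_2,\dots,\varphi_{n-1}$ are isomorphisms.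
   Context: Composition of $f\colon X\to Y$ and $g\colon Y\to Z$ is written $gf$. A morphism $g$ is a weak cokernel of $f$ if $gf=0$ and every $h$ with $hf=0$ factors through $g$. The radical of an additive category is $\operatorname{rad}(X,Y)=\{f\colon X\to Y\mid \mathrm{id}_X-hf \text{ is invertible for all } h\colon Y\to X\}$. *)

theory Defs
  imports Main
begin

text \<open>Composition, addition,
zero and negation are indexed by the objects involved, so hom-sets may overlap.
Composition convention: Comp X Y Z g f is gf for f : X -> Y, g : Y -> Z.\<close>

record ('o, 'm) addcat =
  Obj  :: "'o set"
  Hom  :: "'o \<Rightarrow> 'o \<Rightarrow> 'm set"
  Comp :: "'o \<Rightarrow> 'o \<Rightarrow> 'o \<Rightarrow> 'm \<Rightarrow> 'm \<Rightarrow> 'm"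
  Id   :: "'o \<Rightarrow> 'm"
  Zero :: "'o \<Rightarrow> 'o \<Rightarrow> 'm"
  Add  :: "'o \<Rightarrow> 'o \<Rightarrow> 'm \<Rightarrow> 'm \<Rightarrow> 'm"
  Neg  :: "'o \<Rightarrow> 'o \<Rightarrow> 'm \<Rightarrow> 'm"

definition is_category :: "('o, 'm, 'x) addcat_scheme \<Rightarrow> bool" where
  "is_category C \<longleftrightarrow>
     (\<forall>X\<in>Obj C. Id C X \<in> Hom C X X) \<and>
     (\<forall>X\<in>Obj C. \<forall>Y\<in>Obj C. \<forall>Z\<in>Obj C. \<forall>f\<in>Hom C X Y. \<forall>g\<in>Hom C Y Z.
        Comp C X Y Z g f \<in> Hom C X Z) \<and>
     (\<forall>X\<in>Obj C. \<forall>Y\<in>Obj C. \<forall>f\<in>Hom C X Y.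
        Comp C X Y Y (Id C Y) f = f \<and> Comp C X X Y f (Id C X) = f) \<and>
     (\<forall>W\<in>Obj C. \<forall>X\<in>Obj C. \<forall>Y\<in>Obj C. \<forall>Z\<in>Obj C.
        \<forall>f\<in>Hom C W X. \<forall>g\<in>Hom C X Y. \<forall>h\<in>Hom C Y Z.
        Comp C W Y Z h (Comp C W X Y g f) = Comp C W X Z (Comp C X Y Z h g) f)"

definition is_preadditive :: "('o, 'm, 'x) addcat_scheme \<Rightarrow> bool" where
  "is_preadditive C \<longleftrightarrow> is_category C \<and>
     (\<forall>X\<in>Obj C. \<forall>Y\<in>Obj C.
        Zero C X Y \<in> Hom C X Y \<and>
        (\<forall>f\<in>Hom C X Y. \<forall>g\<in>Hom C X Y. Add C X Y f g \<in> Hom C X Y) \<and>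
        (\<forall>f\<in>Hom C X Y. Neg C X Y f \<in> Hom C X Y) \<and>
        (\<forall>f\<in>Hom C X Y. \<forall>g\<in>Hom C X Y. \<forall>h\<in>Hom C X Y.
           Add C X Y (Add C X Y f g) h = Add C X Y f (Add C X Y g h)) \<and>
        (\<forall>f\<in>Hom C X Y. \<forall>g\<in>Hom C X Y. Add C X Y f g = Add C X Y g f) \<and>
        (\<forall>f\<in>Hom C X Y. Add C X Y f (Zero C X Y) = f) \<and>
        (\<forall>f\<in>Hom C X Y. Add C X Y f (Neg C X Y f) = Zero C X Y)) \<and>
     (\<forall>X\<in>Obj C. \<forall>Y\<in>Obj C. \<forall>Z\<in>Obj C.
        (\<forall>f\<in>Hom C X Y. \<forall>g\<in>Hom C Y Z. \<forall>g'\<in>Hom C Y Z.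
           Comp C X Y Z (Add C Y Z g g') f = Add C X Z (Comp C X Y Z g f) (Comp C X Y Z g' f)) \<and>
        (\<forall>f\<in>Hom C X Y. \<forall>f'\<in>Hom C X Y. \<forall>g\<in>Hom C Y Z.
           Comp C X Y Z g (Add C X Y f f') = Add C X Z (Comp C X Y Z g f) (Comp C X Y Z g f')))"

definition is_biproduct ::
  "('o, 'm, 'x) addcat_scheme \<Rightarrow> 'o \<Rightarrow> 'o \<Rightarrow> 'o \<Rightarrow> 'm \<Rightarrow> 'm \<Rightarrow> 'm \<Rightarrow> 'm \<Rightarrow> bool" where
  "is_biproduct C A B S i1 i2 p1 p2 \<longleftrightarrow>
     S \<in> Obj C \<and> i1 \<in> Hom C A S \<and> i2 \<in> Hom C B S \<and> p1 \<in> Hom C S A \<and> p2 \<in> Hom C S B \<and>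
     Comp C A S A p1 i1 = Id C A \<and> Comp C B S B p2 i2 = Id C B \<and>
     Comp C B S A p1 i2 = Zero C B A \<and> Comp C A S B p2 i1 = Zero C A B \<and>
     Add C S S (Comp C S A S i1 p1) (Comp C S B S i2 p2) = Id C S"

definition is_additive_category :: "('o, 'm, 'x) addcat_scheme \<Rightarrow> bool" where
  "is_additive_category C \<longleftrightarrow> is_preadditive C \<and>
     (\<exists>Z\<in>Obj C. Id C Z = Zero C Z Z) \<and>
     (\<forall>A\<in>Obj C. \<forall>B\<in>Obj C. \<exists>S i1 i2 p1 p2. is_biproduct C A B S i1 i2 p1 p2)"

definition is_iso :: "('o, 'm, 'x) addcat_scheme \<Rightarrow> 'o \<Rightarrow> 'o \<Rightarrow> 'm \<Rightarrow> bool" where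
  "is_iso C X Y f \<longleftrightarrow> f \<in> Hom C X Y \<and>
     (\<exists>g\<in>Hom C Y X. Comp C X Y X g f = Id C X \<and> Comp C Y X Y f g = Id C Y)"

definition weak_cokernel ::
  "('o, 'm, 'x) addcat_scheme \<Rightarrow> 'o \<Rightarrow> 'o \<Rightarrow> 'o \<Rightarrow> 'm \<Rightarrow> 'm \<Rightarrow> bool" where
  "weak_cokernel C X Y Z f g \<longleftrightarrow> f \<in> Hom C X Y \<and> g \<in> Hom C Y Z \<and>
     Comp C X Y Z g f = Zero C X Z \<and>
     (\<forall>W\<in>Obj C. \<forall>h\<in>Hom C Y W. Comp C X Y W h f = Zero C X W \<longrightarrow>
        (\<exists>u\<in>Hom C Z W. h = Comp C Y Z W u g))"

definition in_radical :: "('o, 'm, 'x) addcat_scheme \<Rightarrow> 'o \<Rightarrow> 'o \<Rightarrow> 'm \<Rightarrow> bool" where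
  "in_radical C X Y f \<longleftrightarrow> f \<in> Hom C X Y \<and>
     (\<forall>h\<in>Hom C Y X. is_iso C X X (Add C X X (Id C X) (Neg C X X (Comp C X Y X h f))))"

end

(*
  Build a ladder psi : X' -> X backwards, starting from the identities in degrees 0 and 1: each
  psi (k+1) exists because g k is a weak cokernel of g (k-1) and f k f (k-1) = 0. Then psi phi and
  phi psi are endomorphism ladders that are invertible in degrees 0 and 1, and it suffices to show
  that such a ladder theta is invertible in every degree. If theta (k-1) and theta k are invertible,
  the inverse of theta k extends along f k to some delta; then delta theta (k+1) and
  theta (k+1) delta fix f k. A morphism rho with rho f k = f k is invertible: 1 - rho kills f k,
  so it factors as h f (k+1), and 1 - h f (k+1) is invertible because f (k+1) lies in the radical.
*)
theory Submission
  imports Defs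
begin

locale preadditive =
  fixes C :: "('o, 'm, 'x) addcat_scheme"
  assumes preadditive: "is_preadditive C"
begin

lemma category: "is_category C"
  using preadditive unfolding is_preadditive_def by simp

lemma id_in_hom: "X \<in> Obj C \<Longrightarrow> Id C X \<in> Hom C X X"
  using category unfolding is_category_def by blast

lemma comp_in_hom:
  "\<lbrakk>X \<in> Obj C; Y \<in> Obj C; Z \<in> Obj C; f \<in> Hom C X Y; g \<in> Hom C Y Z\<rbrakk>
    \<Longrightarrow> Comp C X Y Z g f \<in> Hom C X Z"
  using category unfolding is_category_def by blast

lemma comp_id_left: "\<lbrakk>X \<in> Obj C; Y \<in> Obj C; f \<in> Hom C X Y\<rbrakk> \<Longrightarrow> Comp C X Y Y (Id C Y) f = f"
  using category unfolding is_category_def by blast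

lemma comp_id_right: "\<lbrakk>X \<in> Obj C; Y \<in> Obj C; f \<in> Hom C X Y\<rbrakk> \<Longrightarrow> Comp C X X Y f (Id C X) = f"
  using category unfolding is_category_def by blast

lemma comp_assoc:
  "\<lbrakk>W \<in> Obj C; X \<in> Obj C; Y \<in> Obj C; Z \<in> Obj C; f \<in> Hom C W X; g \<in> Hom C X Y; h \<in> Hom C Y Z\<rbrakk>
    \<Longrightarrow> Comp C W Y Z h (Comp C W X Y g f) = Comp C W X Z (Comp C X Y Z h g) f"
  using category unfolding is_category_def by blast

lemma zero_in_hom: "\<lbrakk>X \<in> Obj C; Y \<in> Obj C\<rbrakk> \<Longrightarrow> Zero C X Y \<in> Hom C X Y"
  using preadditive unfolding is_preadditive_def by (metis (no_types, lifting))

lemma add_in_hom: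
  "\<lbrakk>X \<in> Obj C; Y \<in> Obj C; f \<in> Hom C X Y; g \<in> Hom C X Y\<rbrakk> \<Longrightarrow> Add C X Y f g \<in> Hom C X Y"
  using preadditive unfolding is_preadditive_def by (metis (no_types, lifting))

lemma neg_in_hom: "\<lbrakk>X \<in> Obj C; Y \<in> Obj C; f \<in> Hom C X Y\<rbrakk> \<Longrightarrow> Neg C X Y f \<in> Hom C X Y"
  using preadditive unfolding is_preadditive_def by (metis (no_types, lifting))

lemma add_assoc:
  "\<lbrakk>X \<in> Obj C; Y \<in> Obj C; f \<in> Hom C X Y; g \<in> Hom C X Y; h \<in> Hom C X Y\<rbrakk>
    \<Longrightarrow> Add C X Y (Add C X Y f g) h = Add C X Y f (Add C X Y g h)"
  using preadditive unfolding is_preadditive_def by (metis (no_types, lifting))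

lemma add_commute:
  "\<lbrakk>X \<in> Obj C; Y \<in> Obj C; f \<in> Hom C X Y; g \<in> Hom C X Y\<rbrakk> \<Longrightarrow> Add C X Y f g = Add C X Y g f"
  using preadditive unfolding is_preadditive_def by (metis (no_types, lifting))

lemma add_zero_right: "\<lbrakk>X \<in> Obj C; Y \<in> Obj C; f \<in> Hom C X Y\<rbrakk> \<Longrightarrow> Add C X Y f (Zero C X Y) = f"
  using preadditive unfolding is_preadditive_def by (metis (no_types, lifting))

lemma add_neg_right: "\<lbrakk>X \<in> Obj C; Y \<in> Obj C; f \<in> Hom C X Y\<rbrakk> \<Longrightarrow> Add C X Y f (Neg C X Y f) = Zero C X Y"
  using preadditive unfolding is_preadditive_def by (metis (no_types, lifting))

lemma comp_add_left:
  "\<lbrakk>X \<in> Obj C; Y \<in> Obj C; Z \<in> Obj C; f \<in> Hom C X Y; g \<in> Hom C Y Z; g' \<in> Hom C Y Z\<rbrakk>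
    \<Longrightarrow> Comp C X Y Z (Add C Y Z g g') f = Add C X Z (Comp C X Y Z g f) (Comp C X Y Z g' f)"
  using preadditive unfolding is_preadditive_def by (metis (no_types, lifting))

lemma add_neg_left: "\<lbrakk>X \<in> Obj C; Y \<in> Obj C; f \<in> Hom C X Y\<rbrakk> \<Longrightarrow> Add C X Y (Neg C X Y f) f = Zero C X Y"
  by (simp add: add_commute add_neg_right neg_in_hom)

lemma add_left_cancel:
  assumes XY: "X \<in> Obj C" "Y \<in> Obj C"
    and a: "a \<in> Hom C X Y" and b: "b \<in> Hom C X Y" and c: "c \<in> Hom C X Y"
    and eq: "Add C X Y a b = Add C X Y a c"
  shows "b = c"
proof -
  have na: "Neg C X Y a \<in> Hom C X Y" using XY a by (rule neg_in_hom)
  have "b = Add C X Y (Add C X Y (Neg C X Y a) a) b"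
    using XY a b by (simp add: add_neg_left add_commute add_zero_right zero_in_hom)
  also have "\<dots> = Add C X Y (Neg C X Y a) (Add C X Y a c)"
    using XY a b na eq by (simp add: add_assoc)
  also have "\<dots> = Add C X Y (Add C X Y (Neg C X Y a) a) c"
    using XY a c na by (simp add: add_assoc)
  also have "\<dots> = c"
    using XY a c by (simp add: add_neg_left add_commute add_zero_right zero_in_hom)
  finally show ?thesis .
qed

lemma comp_zero_left:
  assumes XYZ: "X \<in> Obj C" "Y \<in> Obj C" "Z \<in> Obj C" and f: "f \<in> Hom C X Y"
  shows "Comp C X Y Z (Zero C Y Z) f = Zero C X Z"
proof (rule add_left_cancel)
  let ?z = "Comp C X Y Z (Zero C Y Z) f"
  have z: "?z \<in> Hom C X Z" using XYZ f by (simp add: comp_in_hom zero_in_hom)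
  have "Add C X Z ?z ?z = Comp C X Y Z (Add C Y Z (Zero C Y Z) (Zero C Y Z)) f"
    using XYZ f by (simp add: comp_add_left zero_in_hom)
  also have "\<dots> = Add C X Z ?z (Zero C X Z)"
    using XYZ z by (simp add: add_zero_right zero_in_hom)
  finally show "Add C X Z ?z ?z = Add C X Z ?z (Zero C X Z)" .
qed (use XYZ f in \<open>simp_all add: zero_in_hom comp_in_hom\<close>)

lemma comp_neg_left:
  assumes XYZ: "X \<in> Obj C" "Y \<in> Obj C" "Z \<in> Obj C" and f: "f \<in> Hom C X Y" and g: "g \<in> Hom C Y Z"
  shows "Comp C X Y Z (Neg C Y Z g) f = Neg C X Z (Comp C X Y Z g f)"
proof (rule add_left_cancel)
  have gf: "Comp C X Y Z g f \<in> Hom C X Z" using XYZ f g by (rule comp_in_hom)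
  show "Add C X Z (Comp C X Y Z g f) (Comp C X Y Z (Neg C Y Z g) f)
      = Add C X Z (Comp C X Y Z g f) (Neg C X Z (Comp C X Y Z g f))"
    using XYZ f g gf
    by (simp add: comp_add_left [symmetric] neg_in_hom add_neg_right comp_zero_left)
qed (use XYZ f g in \<open>simp_all add: comp_in_hom neg_in_hom\<close>)

lemma id_is_iso: "X \<in> Obj C \<Longrightarrow> is_iso C X X (Id C X)"
  unfolding is_iso_def using id_in_hom comp_id_left by blast

lemma is_iso_inverse:
  assumes "is_iso C X Y f"
  obtains g where "g \<in> Hom C Y X" "Comp C X Y X g f = Id C X" "Comp C Y X Y f g = Id C Y"
  using assms unfolding is_iso_def by blast

lemma is_iso_of_comp_isos:
  assumes XY: "X \<in> Obj C" "Y \<in> Obj C" and f: "f \<in> Hom C X Y" and s: "s \<in> Hom C Y X"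
    and sf: "is_iso C X X (Comp C X Y X s f)" and fs: "is_iso C Y Y (Comp C Y X Y f s)"
  shows "is_iso C X Y f"
proof -
  obtain p where p: "p \<in> Hom C X X" and "Comp C X X X p (Comp C X Y X s f) = Id C X"
    using sf by (rule is_iso_inverse)
  then have left: "Comp C X Y X (Comp C Y X X p s) f = Id C X"
    using XY f s by (simp add: comp_assoc)
  obtain q where q: "q \<in> Hom C Y Y" and "Comp C Y Y Y (Comp C Y X Y f s) q = Id C Y"
    using fs by (rule is_iso_inverse)
  then have right: "Comp C Y X Y f (Comp C Y Y X s q) = Id C Y"
    using XY f s by (simp add: comp_assoc)
  have "Comp C Y X X p s = Comp C Y Y X (Comp C Y X X p s) (Comp C Y X Y f (Comp C Y Y X s q))"
    using XY p s by (simp add: right comp_id_right comp_in_hom)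
  also have "\<dots> = Comp C Y X X (Comp C X Y X (Comp C Y X X p s) f) (Comp C Y Y X s q)"
    using XY f p q s by (simp add: comp_assoc comp_in_hom)
  also have "\<dots> = Comp C Y Y X s q"
    using XY q s by (simp add: left comp_id_left comp_in_hom)
  finally show ?thesis
    unfolding is_iso_def using XY f p q s left right by (metis comp_in_hom)
qed

lemma weak_cokernel_factors:
  assumes "weak_cokernel C W Y Z a b" "V \<in> Obj C" "h \<in> Hom C Y V" "Comp C W Y V h a = Zero C W V"
  obtains u where "u \<in> Hom C Z V" "h = Comp C Y Z V u b"
  using assms unfolding weak_cokernel_def by blast

lemma weak_cokernel_extend:
  assumes objs: "W \<in> Obj C" "Y \<in> Obj C" "Z \<in> Obj C" "W' \<in> Obj C" "Y' \<in> Obj C" "Z' \<in> Obj C"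
    and wc: "weak_cokernel C W Y Z a b"
    and a': "a' \<in> Hom C W' Y'" and b': "b' \<in> Hom C Y' Z'"
    and b'a': "Comp C W' Y' Z' b' a' = Zero C W' Z'"
    and u: "u \<in> Hom C W W'" and v: "v \<in> Hom C Y Y'"
    and sq: "Comp C W Y Y' v a = Comp C W W' Y' a' u"
  obtains w where "w \<in> Hom C Z Z'" "Comp C Y Z Z' w b = Comp C Y Y' Z' b' v"
proof -
  have a: "a \<in> Hom C W Y" using wc unfolding weak_cokernel_def by blast
  have "Comp C W Y Z' (Comp C Y Y' Z' b' v) a = Comp C W W' Z' (Comp C W' Y' Z' b' a') u"
    using objs a a' b' u v by (simp add: comp_assoc [symmetric] sq)
  also have "\<dots> = Zero C W Z'" using objs u by (simp add: b'a' comp_zero_left)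
  finally show ?thesis
    using weak_cokernel_factors [OF wc objs(6)] objs b' v that by (metis comp_in_hom)
qed

lemma weak_cokernel_radical_fixed_iso:
  assumes WYZ: "W \<in> Obj C" "Y \<in> Obj C" "Z \<in> Obj C"
    and wc: "weak_cokernel C W Y Z a b" and rad: "in_radical C Y Z b"
    and \<rho>: "\<rho> \<in> Hom C Y Y" and fixed: "Comp C W Y Y \<rho> a = a"
  shows "is_iso C Y Y \<rho>"
proof -
  have a: "a \<in> Hom C W Y" using wc unfolding weak_cokernel_def by blast
  define D where "D = Add C Y Y (Id C Y) (Neg C Y Y \<rho>)"
  have D: "D \<in> Hom C Y Y" unfolding D_def using WYZ \<rho> by (simp add: add_in_hom id_in_hom neg_in_hom)
  have "Comp C W Y Y D a = Zero C W Y"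
    unfolding D_def using WYZ a \<rho>
    by (simp add: comp_add_left comp_neg_left comp_id_left fixed add_neg_right id_in_hom neg_in_hom)
  then obtain h where h: "h \<in> Hom C Z Y" and D_hb: "D = Comp C Y Z Y h b"
    using weak_cokernel_factors [OF wc WYZ(2) D] by blast
  have I: "Id C Y \<in> Hom C Y Y" and nD: "Neg C Y Y D \<in> Hom C Y Y"
    using WYZ D by (simp_all add: id_in_hom neg_in_hom)
  have "Add C Y Y D (Add C Y Y (Id C Y) (Neg C Y Y D)) = Add C Y Y (Add C Y Y D (Neg C Y Y D)) (Id C Y)"
    using add_commute [OF WYZ(2,2) I nD] add_assoc [OF WYZ(2,2) D nD I] by simp
  also have "\<dots> = Id C Y"
    using add_neg_right [OF WYZ(2,2) D] add_commute [OF WYZ(2,2) zero_in_hom [OF WYZ(2,2)] I]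
      add_zero_right [OF WYZ(2,2) I] by simp
  also have "\<dots> = Add C Y Y D \<rho>"
    unfolding D_def using WYZ \<rho> by (simp add: add_assoc add_neg_left add_zero_right id_in_hom neg_in_hom)
  finally have "Add C Y Y D (Add C Y Y (Id C Y) (Neg C Y Y D)) = Add C Y Y D \<rho>" .
  then have "Add C Y Y (Id C Y) (Neg C Y Y D) = \<rho>"
    by (rule add_left_cancel [OF WYZ(2,2) D add_in_hom [OF WYZ(2,2) I nD] \<rho>])
  then show ?thesis using rad h unfolding in_radical_def D_hb by blast
qed

lemma inverse_square:
  assumes objs: "W \<in> Obj C" "W' \<in> Obj C" "Y \<in> Obj C" "Y' \<in> Obj C"
    and a: "a \<in> Hom C W Y" and a': "a' \<in> Hom C W' Y'"
    and \<alpha>: "\<alpha> \<in> Hom C W W'" and \<alpha>': "\<alpha>' \<in> Hom C W' W"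
    and \<beta>: "\<beta> \<in> Hom C Y Y'" and \<beta>': "\<beta>' \<in> Hom C Y' Y"
    and \<alpha>\<alpha>': "Comp C W' W W' \<alpha> \<alpha>' = Id C W'" and \<beta>'\<beta>: "Comp C Y Y' Y \<beta>' \<beta> = Id C Y"
    and sq: "Comp C W Y Y' \<beta> a = Comp C W W' Y' a' \<alpha>"
  shows "Comp C W' Y' Y \<beta>' a' = Comp C W' W Y a \<alpha>'"
proof -
  have "Comp C W' Y' Y \<beta>' a' = Comp C W' Y' Y \<beta>' (Comp C W' W Y' (Comp C W W' Y' a' \<alpha>) \<alpha>')"
    using objs a' \<alpha> \<alpha>' by (simp add: comp_assoc [symmetric] \<alpha>\<alpha>' comp_id_right)
  also have "\<dots> = Comp C W' Y Y (Comp C Y Y' Y \<beta>' \<beta>) (Comp C W' W Y a \<alpha>')"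
    using objs a \<alpha>' \<beta> \<beta>' by (simp add: sq [symmetric] comp_assoc comp_in_hom)
  also have "\<dots> = Comp C W' W Y a \<alpha>'"
    using objs a \<alpha>' by (simp add: \<beta>'\<beta> comp_id_left comp_in_hom)
  finally show ?thesis .
qed

lemma weak_cokernel_square_iso:
  assumes objs: "W \<in> Obj C" "Y \<in> Obj C" "Z \<in> Obj C" "V \<in> Obj C"
    and wab: "weak_cokernel C W Y Z a b" and wbc: "weak_cokernel C Y Z V b c"
    and rad: "in_radical C Z V c"
    and \<alpha>: "is_iso C W W \<alpha>" and \<beta>: "is_iso C Y Y \<beta>" and \<gamma>: "\<gamma> \<in> Hom C Z Z"
    and sq_a: "Comp C W Y Y \<beta> a = Comp C W W Y a \<alpha>"
    and sq_b: "Comp C Y Z Z \<gamma> b = Comp C Y Y Z b \<beta>"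
  shows "is_iso C Z Z \<gamma>"
proof -
  have a: "a \<in> Hom C W Y" and b: "b \<in> Hom C Y Z" and ba: "Comp C W Y Z b a = Zero C W Z"
    using wab unfolding weak_cokernel_def by blast+
  obtain \<alpha>' where \<alpha>': "\<alpha>' \<in> Hom C W W" "Comp C W W W \<alpha> \<alpha>' = Id C W"
    using \<alpha> by (rule is_iso_inverse)
  obtain \<beta>' where \<beta>': "\<beta>' \<in> Hom C Y Y" "Comp C Y Y Y \<beta>' \<beta> = Id C Y" "Comp C Y Y Y \<beta> \<beta>' = Id C Y"
    using \<beta> by (rule is_iso_inverse)
  have \<alpha>\<beta>: "\<alpha> \<in> Hom C W W" "\<beta> \<in> Hom C Y Y" using \<alpha> \<beta> unfolding is_iso_def by blast+
  have "Comp C W Y Y \<beta>' a = Comp C W W Y a \<alpha>'"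
    using inverse_square [OF objs(1,1,2,2) a a \<alpha>\<beta>(1) \<alpha>'(1) \<alpha>\<beta>(2) \<beta>'(1) \<alpha>'(2) \<beta>'(2) sq_a] .
  then obtain \<delta> where \<delta>: "\<delta> \<in> Hom C Z Z" and sq_\<delta>: "Comp C Y Z Z \<delta> b = Comp C Y Y Z b \<beta>'"
    using weak_cokernel_extend [OF objs(1-3,1-3) wab a b ba \<alpha>'(1) \<beta>'(1)] by blast
  have "Comp C Y Z Z (Comp C Z Z Z \<delta> \<gamma>) b = Comp C Y Y Z (Comp C Y Z Z \<delta> b) \<beta>"
    using objs b \<alpha>\<beta> \<gamma> \<delta> by (simp add: comp_assoc [symmetric] sq_b)
  also have "\<dots> = Comp C Y Y Z b (Comp C Y Y Y \<beta>' \<beta>)"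
    using objs b \<alpha>\<beta> \<beta>'(1) by (simp add: sq_\<delta> comp_assoc)
  finally have "Comp C Y Z Z (Comp C Z Z Z \<delta> \<gamma>) b = b"
    using objs b by (simp add: \<beta>' comp_id_right)
  then have \<delta>\<gamma>: "is_iso C Z Z (Comp C Z Z Z \<delta> \<gamma>)"
    using weak_cokernel_radical_fixed_iso [OF objs(2-4) wbc rad] objs \<gamma> \<delta> comp_in_hom by blast
  have "Comp C Y Z Z (Comp C Z Z Z \<gamma> \<delta>) b = Comp C Y Y Z (Comp C Y Z Z \<gamma> b) \<beta>'"
    using objs b \<beta>'(1) \<gamma> \<delta> by (simp add: comp_assoc [symmetric] sq_\<delta>)
  also have "\<dots> = Comp C Y Y Z b (Comp C Y Y Y \<beta> \<beta>')"
    using objs b \<alpha>\<beta> \<beta>'(1) by (simp add: sq_b comp_assoc)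
  finally have "Comp C Y Z Z (Comp C Z Z Z \<gamma> \<delta>) b = b"
    using objs b by (simp add: \<beta>' comp_id_right)
  then have \<gamma>\<delta>: "is_iso C Z Z (Comp C Z Z Z \<gamma> \<delta>)"
    using weak_cokernel_radical_fixed_iso [OF objs(2-4) wbc rad] objs \<gamma> \<delta> comp_in_hom by blast
  show ?thesis using is_iso_of_comp_isos [OF objs(3,3) \<gamma> \<delta> \<delta>\<gamma> \<gamma>\<delta>] .
qed

end

definition is_chain :: "('o, 'm, 'x) addcat_scheme \<Rightarrow> nat \<Rightarrow> (nat \<Rightarrow> 'o) \<Rightarrow> (nat \<Rightarrow> 'm) \<Rightarrow> bool" where
  "is_chain C m X f \<longleftrightarrow>
     (\<forall>k\<le>m. X k \<in> Obj C) \<and> (\<forall>k<m. f k \<in> Hom C (X k) (X (Suc k)))"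

definition ladder_hom ::
  "('o, 'm, 'x) addcat_scheme \<Rightarrow> nat \<Rightarrow> (nat \<Rightarrow> 'o) \<Rightarrow> (nat \<Rightarrow> 'm) \<Rightarrow> (nat \<Rightarrow> 'o) \<Rightarrow> (nat \<Rightarrow> 'm)
     \<Rightarrow> (nat \<Rightarrow> 'm) \<Rightarrow> bool" where
  "ladder_hom C m X f Y g \<phi> \<longleftrightarrow>
     (\<forall>k\<le>m. \<phi> k \<in> Hom C (X k) (Y k)) \<and>
     (\<forall>k<m. Comp C (X k) (X (Suc k)) (Y (Suc k)) (\<phi> (Suc k)) (f k)
          = Comp C (X k) (Y k) (Y (Suc k)) (g k) (\<phi> k))"

context preadditive
begin

lemma ladder_hom_comp:
  assumes X: "is_chain C m X f" and Y: "is_chain C m Y g" and Z: "is_chain C m Z h"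
    and \<phi>: "ladder_hom C m X f Y g \<phi>" and \<psi>: "ladder_hom C m Y g Z h \<psi>"
  shows "ladder_hom C m X f Z h (\<lambda>k. Comp C (X k) (Y k) (Z k) (\<psi> k) (\<phi> k))"
  unfolding ladder_hom_def
proof (intro conjI allI impI)
  fix k
  assume "k \<le> m"
  then show "Comp C (X k) (Y k) (Z k) (\<psi> k) (\<phi> k) \<in> Hom C (X k) (Z k)"
    using X Y Z \<phi> \<psi> unfolding is_chain_def ladder_hom_def by (simp add: comp_in_hom)
next
  fix k
  assume k: "k < m"
  have objs: "X k \<in> Obj C" "Y k \<in> Obj C" "Z k \<in> Obj C"
      "X (Suc k) \<in> Obj C" "Y (Suc k) \<in> Obj C" "Z (Suc k) \<in> Obj C"
    using X Y Z k unfolding is_chain_def by auto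
  have homs: "f k \<in> Hom C (X k) (X (Suc k))" "g k \<in> Hom C (Y k) (Y (Suc k))"
      "h k \<in> Hom C (Z k) (Z (Suc k))"
      "\<phi> k \<in> Hom C (X k) (Y k)" "\<phi> (Suc k) \<in> Hom C (X (Suc k)) (Y (Suc k))"
      "\<psi> k \<in> Hom C (Y k) (Z k)" "\<psi> (Suc k) \<in> Hom C (Y (Suc k)) (Z (Suc k))"
    using X Y Z \<phi> \<psi> k unfolding is_chain_def ladder_hom_def by auto
  have sq: "Comp C (X k) (X (Suc k)) (Y (Suc k)) (\<phi> (Suc k)) (f k) = Comp C (X k) (Y k) (Y (Suc k)) (g k) (\<phi> k)"
      "Comp C (Y k) (Y (Suc k)) (Z (Suc k)) (\<psi> (Suc k)) (g k) = Comp C (Y k) (Z k) (Z (Suc k)) (h k) (\<psi> k)"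
    using \<phi> \<psi> k unfolding ladder_hom_def by auto
  have "Comp C (X k) (X (Suc k)) (Z (Suc k))
          (Comp C (X (Suc k)) (Y (Suc k)) (Z (Suc k)) (\<psi> (Suc k)) (\<phi> (Suc k))) (f k)
      = Comp C (X k) (Y k) (Z (Suc k)) (Comp C (Y k) (Y (Suc k)) (Z (Suc k)) (\<psi> (Suc k)) (g k)) (\<phi> k)"
    using objs homs by (simp add: comp_assoc [symmetric] sq(1))
  also have "\<dots> = Comp C (X k) (Z k) (Z (Suc k)) (h k) (Comp C (X k) (Y k) (Z k) (\<psi> k) (\<phi> k))"
    using objs homs by (simp add: comp_assoc [symmetric] sq(2))
  finally show "Comp C (X k) (X (Suc k)) (Z (Suc k))
          (Comp C (X (Suc k)) (Y (Suc k)) (Z (Suc k)) (\<psi> (Suc k)) (\<phi> (Suc k))) (f k)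
      = Comp C (X k) (Z k) (Z (Suc k)) (h k) (Comp C (X k) (Y k) (Z k) (\<psi> k) (\<phi> k))" .
qed

lemma ladder_hom_extend_Suc:
  assumes X: "is_chain C m X f" and Y: "is_chain C m Y g" and j: "Suc j < m"
    and wc: "weak_cokernel C (X j) (X (Suc j)) (X (Suc (Suc j))) (f j) (f (Suc j))"
    and zero: "Comp C (Y j) (Y (Suc j)) (Y (Suc (Suc j))) (g (Suc j)) (g j) = Zero C (Y j) (Y (Suc (Suc j)))"
    and \<phi>: "ladder_hom C (Suc j) X f Y g \<phi>"
  obtains u where "ladder_hom C (Suc (Suc j)) X f Y g (\<phi>(Suc (Suc j) := u))"
proof -
  have objs: "X j \<in> Obj C" "X (Suc j) \<in> Obj C" "X (Suc (Suc j)) \<in> Obj C"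
      "Y j \<in> Obj C" "Y (Suc j) \<in> Obj C" "Y (Suc (Suc j)) \<in> Obj C"
    using X Y j unfolding is_chain_def by auto
  have homs: "g j \<in> Hom C (Y j) (Y (Suc j))" "g (Suc j) \<in> Hom C (Y (Suc j)) (Y (Suc (Suc j)))"
      "\<phi> j \<in> Hom C (X j) (Y j)" "\<phi> (Suc j) \<in> Hom C (X (Suc j)) (Y (Suc j))"
    using Y \<phi> j unfolding is_chain_def ladder_hom_def by auto
  have sq: "Comp C (X j) (X (Suc j)) (Y (Suc j)) (\<phi> (Suc j)) (f j) = Comp C (X j) (Y j) (Y (Suc j)) (g j) (\<phi> j)"
    using \<phi> unfolding ladder_hom_def by simp
  obtain u where u: "u \<in> Hom C (X (Suc (Suc j))) (Y (Suc (Suc j)))"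
    and sq_u: "Comp C (X (Suc j)) (X (Suc (Suc j))) (Y (Suc (Suc j))) u (f (Suc j))
             = Comp C (X (Suc j)) (Y (Suc j)) (Y (Suc (Suc j))) (g (Suc j)) (\<phi> (Suc j))"
    using weak_cokernel_extend [OF objs wc homs(1,2) zero homs(3,4) sq] .
  have "ladder_hom C (Suc (Suc j)) X f Y g (\<phi>(Suc (Suc j) := u))"
    using \<phi> u sq_u unfolding ladder_hom_def by (auto simp: le_Suc_eq less_Suc_eq)
  then show ?thesis by (rule that)
qed

lemma ladder_hom_extend:
  assumes X: "is_chain C m X f" and Y: "is_chain C m Y g"
    and wc: "\<forall>k. Suc k < m \<longrightarrow> weak_cokernel C (X k) (X (Suc k)) (X (Suc (Suc k))) (f k) (f (Suc k))"
    and zero: "\<forall>k. Suc k < m \<longrightarrow>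
      Comp C (Y k) (Y (Suc k)) (Y (Suc (Suc k))) (g (Suc k)) (g k) = Zero C (Y k) (Y (Suc (Suc k)))"
    and \<phi>: "ladder_hom C j X f Y g \<phi>" and j: "1 \<le> j" "j \<le> m"
  obtains \<psi> where "ladder_hom C m X f Y g \<psi>" "\<forall>k\<le>j. \<psi> k = \<phi> k"
proof -
  from \<open>j \<le> m\<close> have "\<exists>\<psi>. ladder_hom C m X f Y g \<psi> \<and> (\<forall>k\<le>j. \<psi> k = \<phi> k)"
  proof (induction m rule: dec_induct)
    case base
    show ?case using \<phi> by blast
  next
    case (step k)
    then obtain \<psi> where \<psi>: "ladder_hom C k X f Y g \<psi>" "\<forall>i\<le>j. \<psi> i = \<phi> i" by blast
    obtain i where k: "k = Suc i" using j step.hyps(1) by (cases k) auto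
    have "weak_cokernel C (X i) (X (Suc i)) (X (Suc (Suc i))) (f i) (f (Suc i))"
      and "Comp C (Y i) (Y (Suc i)) (Y (Suc (Suc i))) (g (Suc i)) (g i) = Zero C (Y i) (Y (Suc (Suc i)))"
      using wc zero step.hyps(2) k by simp_all
    then obtain u where "ladder_hom C (Suc k) X f Y g (\<psi>(Suc k := u))"
      using ladder_hom_extend_Suc [OF X Y _ _ _ \<psi>(1) [unfolded k]] step.hyps(2) k by blast
    then show ?case using \<psi>(2) step.hyps(1) by auto
  qed
  then show ?thesis using that by blast
qed

lemma ladder_hom_endo_iso:
  assumes X: "is_chain C m X f"
    and wc: "\<forall>k. Suc k < m \<longrightarrow> weak_cokernel C (X k) (X (Suc k)) (X (Suc (Suc k))) (f k) (f (Suc k))"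
    and rad: "\<forall>k. 2 \<le> k \<and> k < m \<longrightarrow> in_radical C (X k) (X (Suc k)) (f k)"
    and \<theta>: "ladder_hom C m X f X f \<theta>"
    and \<theta>0: "is_iso C (X 0) (X 0) (\<theta> 0)" and \<theta>1: "is_iso C (X 1) (X 1) (\<theta> 1)"
    and k: "k < m"
  shows "is_iso C (X k) (X k) (\<theta> k)"
proof -
  have "is_iso C (X j) (X j) (\<theta> j) \<and> is_iso C (X (Suc j)) (X (Suc j)) (\<theta> (Suc j))"
    if "Suc j < m" for j
    using that
  proof (induction j)
    case 0
    show ?case using \<theta>0 \<theta>1 by simp
  next
    case (Suc j)
    have objs: "X j \<in> Obj C" "X (Suc j) \<in> Obj C" "X (Suc (Suc j)) \<in> Obj C" "X (Suc (Suc (Suc j))) \<in> Obj C"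
      using X Suc.prems unfolding is_chain_def by auto
    have wab: "weak_cokernel C (X j) (X (Suc j)) (X (Suc (Suc j))) (f j) (f (Suc j))"
      and wbc: "weak_cokernel C (X (Suc j)) (X (Suc (Suc j))) (X (Suc (Suc (Suc j))))
        (f (Suc j)) (f (Suc (Suc j)))"
      and rad_c: "in_radical C (X (Suc (Suc j))) (X (Suc (Suc (Suc j)))) (f (Suc (Suc j)))"
      using wc rad Suc.prems by auto
    have \<gamma>: "\<theta> (Suc (Suc j)) \<in> Hom C (X (Suc (Suc j))) (X (Suc (Suc j)))"
      and sq_a: "Comp C (X j) (X (Suc j)) (X (Suc j)) (\<theta> (Suc j)) (f j)
        = Comp C (X j) (X j) (X (Suc j)) (f j) (\<theta> j)"
      and sq_b: "Comp C (X (Suc j)) (X (Suc (Suc j))) (X (Suc (Suc j))) (\<theta> (Suc (Suc j))) (f (Suc j))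
        = Comp C (X (Suc j)) (X (Suc j)) (X (Suc (Suc j))) (f (Suc j)) (\<theta> (Suc j))"
      using \<theta> Suc.prems unfolding ladder_hom_def by auto
    from Suc.IH Suc.prems have "is_iso C (X j) (X j) (\<theta> j)"
      and "is_iso C (X (Suc j)) (X (Suc j)) (\<theta> (Suc j))" by simp_all
    with weak_cokernel_square_iso [OF objs wab wbc rad_c _ _ \<gamma> sq_a sq_b] show ?case by simp
  qed
  then show ?thesis using \<theta>0 k by (cases k) auto
qed

lemma ladder_hom_inverse_extend:
  assumes X: "is_chain C m X f" and Y: "is_chain C m Y g" and m: "1 \<le> m"
    and zero_f: "\<forall>k. Suc k < m \<longrightarrow>
      Comp C (X k) (X (Suc k)) (X (Suc (Suc k))) (f (Suc k)) (f k) = Zero C (X k) (X (Suc (Suc k)))"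
    and wc_g: "\<forall>k. Suc k < m \<longrightarrow> weak_cokernel C (Y k) (Y (Suc k)) (Y (Suc (Suc k))) (g k) (g (Suc k))"
    and \<phi>: "ladder_hom C m X f Y g \<phi>"
    and \<phi>0: "is_iso C (X 0) (Y 0) (\<phi> 0)" and \<phi>1: "is_iso C (X 1) (Y 1) (\<phi> 1)"
  obtains \<psi> where "ladder_hom C m Y g X f \<psi>"
    "Comp C (X 0) (Y 0) (X 0) (\<psi> 0) (\<phi> 0) = Id C (X 0)" "Comp C (Y 0) (X 0) (Y 0) (\<phi> 0) (\<psi> 0) = Id C (Y 0)"
    "Comp C (X 1) (Y 1) (X 1) (\<psi> 1) (\<phi> 1) = Id C (X 1)" "Comp C (Y 1) (X 1) (Y 1) (\<phi> 1) (\<psi> 1) = Id C (Y 1)"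
proof -
  have objs: "X 0 \<in> Obj C" "Y 0 \<in> Obj C" "X 1 \<in> Obj C" "Y 1 \<in> Obj C"
    using X Y m unfolding is_chain_def by auto
  have homs: "f 0 \<in> Hom C (X 0) (X 1)" "g 0 \<in> Hom C (Y 0) (Y 1)"
      "\<phi> 0 \<in> Hom C (X 0) (Y 0)" "\<phi> 1 \<in> Hom C (X 1) (Y 1)"
    using X Y \<phi> m unfolding is_chain_def ladder_hom_def by auto
  have sq: "Comp C (X 0) (X 1) (Y 1) (\<phi> 1) (f 0) = Comp C (X 0) (Y 0) (Y 1) (g 0) (\<phi> 0)"
    using \<phi> m unfolding ladder_hom_def by auto
  obtain \<psi>0 where \<psi>0: "\<psi>0 \<in> Hom C (Y 0) (X 0)"
    "Comp C (X 0) (Y 0) (X 0) \<psi>0 (\<phi> 0) = Id C (X 0)" "Comp C (Y 0) (X 0) (Y 0) (\<phi> 0) \<psi>0 = Id C (Y 0)"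
    using \<phi>0 by (rule is_iso_inverse)
  obtain \<psi>1 where \<psi>1: "\<psi>1 \<in> Hom C (Y 1) (X 1)"
    "Comp C (X 1) (Y 1) (X 1) \<psi>1 (\<phi> 1) = Id C (X 1)" "Comp C (Y 1) (X 1) (Y 1) (\<phi> 1) \<psi>1 = Id C (Y 1)"
    using \<phi>1 by (rule is_iso_inverse)
  have "Comp C (Y 0) (Y 1) (X 1) \<psi>1 (g 0) = Comp C (Y 0) (X 0) (X 1) (f 0) \<psi>0"
    using inverse_square [OF objs homs(1,2) homs(3) \<psi>0(1) homs(4) \<psi>1(1) \<psi>0(3) \<psi>1(2) sq] .
  then have "ladder_hom C 1 Y g X f (\<lambda>i. if i = 0 then \<psi>0 else \<psi>1)"
    using \<psi>0(1) \<psi>1(1) unfolding ladder_hom_def by (auto simp: le_Suc_eq)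
  then obtain \<psi> where \<psi>: "ladder_hom C m Y g X f \<psi>"
    and "\<forall>i\<le>1. \<psi> i = (if i = 0 then \<psi>0 else \<psi>1)"
    using ladder_hom_extend [OF Y X wc_g zero_f _ order.refl m] by blast
  then have "\<psi> 0 = \<psi>0" "\<psi> 1 = \<psi>1" by auto
  with \<psi> \<psi>0 \<psi>1 show ?thesis using that by simp
qed

lemma ladder_hom_iso:
  assumes X: "is_chain C m X f" and Y: "is_chain C m Y g"
    and wc_f: "\<forall>k. Suc k < m \<longrightarrow> weak_cokernel C (X k) (X (Suc k)) (X (Suc (Suc k))) (f k) (f (Suc k))"
    and wc_g: "\<forall>k. Suc k < m \<longrightarrow> weak_cokernel C (Y k) (Y (Suc k)) (Y (Suc (Suc k))) (g k) (g (Suc k))"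
    and rad_f: "\<forall>k. 2 \<le> k \<and> k < m \<longrightarrow> in_radical C (X k) (X (Suc k)) (f k)"
    and rad_g: "\<forall>k. 2 \<le> k \<and> k < m \<longrightarrow> in_radical C (Y k) (Y (Suc k)) (g k)"
    and \<phi>: "ladder_hom C m X f Y g \<phi>"
    and \<phi>0: "is_iso C (X 0) (Y 0) (\<phi> 0)" and \<phi>1: "is_iso C (X 1) (Y 1) (\<phi> 1)"
    and k: "k < m"
  shows "is_iso C (X k) (Y k) (\<phi> k)"
proof (cases "k \<le> 1")
  case True
  then show ?thesis using \<phi>0 \<phi>1 by (cases k) auto
next
  case False
  with k have m: "1 \<le> m" by simp
  have "\<forall>k. Suc k < m \<longrightarrow>
      Comp C (X k) (X (Suc k)) (X (Suc (Suc k))) (f (Suc k)) (f k) = Zero C (X k) (X (Suc (Suc k)))"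
    using wc_f unfolding weak_cokernel_def by blast
  then obtain \<psi> where \<psi>: "ladder_hom C m Y g X f \<psi>"
    and inv: "Comp C (X 0) (Y 0) (X 0) (\<psi> 0) (\<phi> 0) = Id C (X 0)"
      "Comp C (Y 0) (X 0) (Y 0) (\<phi> 0) (\<psi> 0) = Id C (Y 0)"
      "Comp C (X 1) (Y 1) (X 1) (\<psi> 1) (\<phi> 1) = Id C (X 1)"
      "Comp C (Y 1) (X 1) (Y 1) (\<phi> 1) (\<psi> 1) = Id C (Y 1)"
    using ladder_hom_inverse_extend [OF X Y m _ wc_g \<phi> \<phi>0 \<phi>1] by blast
  have objs: "X 0 \<in> Obj C" "Y 0 \<in> Obj C" "X 1 \<in> Obj C" "Y 1 \<in> Obj C"
      "X k \<in> Obj C" "Y k \<in> Obj C"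
    using X Y m k unfolding is_chain_def by auto
  have "is_iso C (X k) (X k) (Comp C (X k) (Y k) (X k) (\<psi> k) (\<phi> k))"
    using ladder_hom_endo_iso [OF X wc_f rad_f ladder_hom_comp [OF X Y X \<phi> \<psi>] _ _ k] inv objs
    by (simp add: id_is_iso)
  moreover have "is_iso C (Y k) (Y k) (Comp C (Y k) (X k) (Y k) (\<phi> k) (\<psi> k))"
    using ladder_hom_endo_iso [OF Y wc_g rad_g ladder_hom_comp [OF Y X Y \<psi> \<phi>] _ _ k] inv objs
    by (simp add: id_is_iso)
  moreover have "\<phi> k \<in> Hom C (X k) (Y k)" "\<psi> k \<in> Hom C (Y k) (X k)"
    using \<phi> \<psi> k unfolding ladder_hom_def by auto
  ultimately show ?thesis using objs by (simp add: is_iso_of_comp_isos)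
qed

lemma ladder_hom_identities_01:
  assumes n2: "2 \<le> n" and X: "is_chain C n X f" and X': "is_chain C n X' g"
    and X'0: "X' 0 = X 0" and X'1: "X' 1 = X 1" and g0: "g 0 = f 0"
    and homphi: "\<forall>k. 2 \<le> k \<and> k \<le> n \<longrightarrow> \<phi> k \<in> Hom C (X k) (X' k)"
    and sq2: "Comp C (X 1) (X 2) (X' 2) (\<phi> 2) (f 1) = g 1"
    and sq: "\<forall>k. 2 \<le> k \<and> k \<le> n - 1 \<longrightarrow>
      Comp C (X k) (X (Suc k)) (X' (Suc k)) (\<phi> (Suc k)) (f k) = Comp C (X k) (X' k) (X' (Suc k)) (g k) (\<phi> k)"
  shows "ladder_hom C n X f X' g (\<phi>(0 := Id C (X 0), 1 := Id C (X 1)))"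
  unfolding ladder_hom_def
proof (intro conjI allI impI)
  fix k
  assume "k \<le> n"
  then show "(\<phi>(0 := Id C (X 0), 1 := Id C (X 1))) k \<in> Hom C (X k) (X' k)"
    using homphi X X'0 X'1 unfolding is_chain_def by (auto simp: id_in_hom not_less_eq_eq)
next
  fix k
  assume k: "k < n"
  have objs: "X 0 \<in> Obj C" "X 1 \<in> Obj C" "X' 2 \<in> Obj C"
    using X X' n2 unfolding is_chain_def by auto
  have "f 0 \<in> Hom C (X 0) (X 1)" "g 1 \<in> Hom C (X' 1) (X' 2)"
    using X X' n2 unfolding is_chain_def by (simp_all add: numeral_2_eq_2)
  then have homs: "f 0 \<in> Hom C (X 0) (X 1)" "g 1 \<in> Hom C (X 1) (X' 2)"
    using X'1 by simp_all
  consider "k = 0" | "k = 1" | "2 \<le> k" by linarith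
  then show "Comp C (X k) (X (Suc k)) (X' (Suc k)) ((\<phi>(0 := Id C (X 0), 1 := Id C (X 1))) (Suc k)) (f k)
      = Comp C (X k) (X' k) (X' (Suc k)) (g k) ((\<phi>(0 := Id C (X 0), 1 := Id C (X 1))) k)"
  proof cases
    case 1
    then show ?thesis using objs homs X'0 X'1 g0 by (simp add: comp_id_left comp_id_right)
  next
    case 2
    then show ?thesis using objs homs X'1 sq2 by (simp add: comp_id_right numeral_2_eq_2)
  next
    case 3
    then show ?thesis using sq k by simp
  qed
qed

end

theorem mainTheorem2:
  fixes C :: "('o, 'm, 'x) addcat_scheme"
    and n :: nat
    and X X' :: "nat \<Rightarrow> 'o"
    and f g \<phi> :: "nat \<Rightarrow> 'm"
  assumes add: "is_additive_category C"
    and n2: "n \<ge> 2"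
    and objX: "\<forall>i\<le>n. X i \<in> Obj C"
    and objX': "\<forall>i\<le>n. X' i \<in> Obj C"
    and X'0: "X' 0 = X 0" and X'1: "X' 1 = X 1"
    and g0: "g 0 = f 0"
    and homf: "\<forall>i<n. f i \<in> Hom C (X i) (X (Suc i))"
    and homg: "\<forall>i<n. g i \<in> Hom C (X' i) (X' (Suc i))"
    and homphi: "\<forall>k. 2 \<le> k \<and> k \<le> n \<longrightarrow> \<phi> k \<in> Hom C (X k) (X' k)"
    and sq2: "Comp C (X 1) (X 2) (X' 2) (\<phi> 2) (f 1) = g 1"
    and sq: "\<forall>k. 2 \<le> k \<and> k \<le> n - 1 \<longrightarrow>
               Comp C (X k) (X (Suc k)) (X' (Suc k)) (\<phi> (Suc k)) (f k)
             = Comp C (X k) (X' k) (X' (Suc k)) (g k) (\<phi> k)"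
    and wcf: "\<forall>i. 1 \<le> i \<and> i \<le> n - 1 \<longrightarrow>
               weak_cokernel C (X (i - 1)) (X i) (X (Suc i)) (f (i - 1)) (f i)"
    and wcg: "\<forall>i. 1 \<le> i \<and> i \<le> n - 1 \<longrightarrow>
               weak_cokernel C (X' (i - 1)) (X' i) (X' (Suc i)) (g (i - 1)) (g i)"
    and radf: "\<forall>i. 2 \<le> i \<and> i \<le> n - 1 \<longrightarrow> in_radical C (X i) (X (Suc i)) (f i)"
    and radg: "\<forall>i. 2 \<le> i \<and> i \<le> n - 1 \<longrightarrow> in_radical C (X' i) (X' (Suc i)) (g i)"
  shows "\<forall>k. 2 \<le> k \<and> k \<le> n - 1 \<longrightarrow> is_iso C (X k) (X' k) (\<phi> k)"
proof -
  interpret preadditive C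
    using add unfolding is_additive_category_def by unfold_locales blast
  define \<phi>' where "\<phi>' = \<phi>(0 := Id C (X 0), 1 := Id C (X 1))"
  have chains: "is_chain C n X f" "is_chain C n X' g"
    using objX objX' homf homg unfolding is_chain_def by blast+
  have "weak_cokernel C (X k) (X (Suc k)) (X (Suc (Suc k))) (f k) (f (Suc k))"
      "weak_cokernel C (X' k) (X' (Suc k)) (X' (Suc (Suc k))) (g k) (g (Suc k))" if "Suc k < n" for k
    using wcf [rule_format, of "Suc k"] wcg [rule_format, of "Suc k"] that by simp_all
  then have wc: "\<forall>k. Suc k < n \<longrightarrow> weak_cokernel C (X k) (X (Suc k)) (X (Suc (Suc k))) (f k) (f (Suc k))"
      "\<forall>k. Suc k < n \<longrightarrow> weak_cokernel C (X' k) (X' (Suc k)) (X' (Suc (Suc k))) (g k) (g (Suc k))"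
    by blast+
  have rad: "\<forall>k. 2 \<le> k \<and> k < n \<longrightarrow> in_radical C (X k) (X (Suc k)) (f k)"
      "\<forall>k. 2 \<le> k \<and> k < n \<longrightarrow> in_radical C (X' k) (X' (Suc k)) (g k)"
    using radf radg by auto
  have "ladder_hom C n X f X' g \<phi>'"
    unfolding \<phi>'_def using ladder_hom_identities_01 [OF n2 chains X'0 X'1 g0 homphi sq2 sq] .
  moreover have "is_iso C (X 0) (X' 0) (\<phi>' 0)" "is_iso C (X 1) (X' 1) (\<phi>' 1)"
    using objX [rule_format, of 0] objX [rule_format, of 1] n2 X'0 X'1
    unfolding \<phi>'_def by (simp_all add: id_is_iso)
  ultimately have iso: "is_iso C (X k) (X' k) (\<phi>' k)" if "k < n" for k
    by (rule ladder_hom_iso [OF chains wc rad _ _ _ that])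
  show ?thesis
  proof (intro allI impI)
    fix k
    assume "2 \<le> k \<and> k \<le> n - 1"
    then have "k < n" and "\<phi>' k = \<phi> k" using n2 unfolding \<phi>'_def by auto
    then show "is_iso C (X k) (X' k) (\<phi> k)" using iso by metis
  qed
qed

end
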